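(* Let $p \equiv 1 \pmod 8$ and $q \equiv 3 \pmod 4$ be primes with $\left(\frac{p}{q}\right) = +1$. For a nonzero squarefree integer $b_1$ dividing $-4pq^2$, let $\mathcal{T}(b_1)$ denote the curve $$N^2 = b_1 M^4 - \frac{4pq^2}{b_1} e^4,$$ and call a rational point $(M,e,N)\in\mathbb{Q}^3$ on it nontrivial if $(M,e) \neq (0,0)$. Then: (a) if $\mathcal{T}(b_1)$ has a nontrivial rational point for some $b_1 \in \{2, -2, -2p, 2p\}$, then $\left(\frac{2}{p}\right)_4 = +1$; (b) if $\mathcal{T}(b_1)$ has a nontrivial rational point for some $b_1 \in \{q, -q, -pq, pq\}$, then $\left(\frac{q}{p}\right)_4 = +1$; (c) if $\mathcal{T}(b_1)$ has a nontrivial rational point for some $b_1 \in \{2q, -2q, -2pq, 2pq\}$, then $\left(\frac{2q}{p}\right)_4 = +1$.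
   Context: For a prime $p \equiv 1 \pmod 8$ and an integer $c$ that is a nonzero quadratic residue modulo $p$, the quartic residue symbol $\left(\frac{c}{p}\right)_4 \in \{\pm 1\}$ is defined by $\left(\frac{c}{p}\right)_4 \equiv c^{(p-1)/4} \pmod p$; it equals $+1$ iff $c$ is a fourth power modulo $p$. (Under the hypotheses, $2$, $q$ and $2q$ are quadratic residues modulo $p$.) The curves $\mathcal{T}(b_1)$ are the 2-isogeny descent torsors for the elliptic curve $y^2 = x(x^2 - 4pq^2)$; the paper states the result as a table listing, for each $b_1 \in\{2,-2,q,-q,2q,-2q\}$, the torsors $\mathcal{T}(b_1)$ and $\mathcal{T}(-pb_1)$ together with the corresponding condition. *)

theory Defs
  imports "HOL-Number_Theory.Number_Theory"
begin

text \<open>Quartic residue symbol (c/p)_4 in {1,-1}, defined by (c/p)_4 = c^((p-1)/4) mod p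
  (meaningful for p = 1 mod 8 prime and c a nonzero quadratic residue mod p).\<close>
definition quartic_symbol :: "int \<Rightarrow> int \<Rightarrow> int" where
  "quartic_symbol c p = (if [c ^ nat ((p - 1) div 4) = 1] (mod p) then 1 else -1)"

definition has_nontrivial_point :: "int \<Rightarrow> int \<Rightarrow> int \<Rightarrow> bool" where
  "has_nontrivial_point p q b1 \<longleftrightarrow>
     (\<exists>M e N :: rat. (M, e) \<noteq> (0, 0) \<and>
        N ^ 2 = of_int b1 * M ^ 4 - (of_int (4 * p * q ^ 2) / of_int b1) * e ^ 4)"

end

theory Submission
  imports Defs
begin

text \<open>Clearing denominators turns a nontrivial rational point on T(b) into coprime integers
  m, f, n with n^2 = b m^4 - c f^4, where b c = p d^2 and d = 2q. Every prime factor r of n is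
  a quadratic residue mod p: r = p trivially, r = 2 because p = 1 (mod 8), r = q by reciprocity,
  and any other r because the equation gives (b m^2)^2 = p (d f^2)^2 (mod r), so p is a square
  mod r and reciprocity applies again. Hence n^2 is a fourth power mod p. As p divides exactly one
  of b and c, reducing the equation mod p shows that b (if p divides c) or -c (if p divides b) is
  a fourth power mod p. For b in {t, -t, -p t, p t} with t k = 2q this coefficient is t or t k^2
  up to sign; since p = 1 (mod 8), -1 is a fourth power mod p, and so is k^2 because k is a
  quadratic residue.\<close>

lemma fermat_theorem_int:
  fixes p a :: int
  assumes "prime p" and "\<not> p dvd a"
  shows "[a ^ nat (p - 1) = 1] (mod p)"
proof -
  interpret residues p "residue_ring p"
    using prime_gt_1_int[OF assms(1)] by unfold_locales simp_all
  have "coprime a p"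
    using assms prime_imp_coprime coprime_commute by blast
  then have "[a ^ totient (nat p) = 1] (mod p)"
    by (rule euler_theorem)
  moreover have "totient (nat p) = nat (p - 1)"
    using assms(1) prime_gt_1_int[OF assms(1)] by (simp add: totient_prime nat_diff_distrib)
  ultimately show ?thesis by simp
qed

lemma rat_power2_eq_of_int_imp_int:
  fixes x :: rat
  assumes "x ^ 2 = of_int k"
  shows "\<exists>n. x = of_int n"
proof -
  obtain a d where "quotient_of x = (a, d)" by (cases "quotient_of x")
  then have "d > 0" "coprime a d" "x = of_int a / of_int d"
    by (simp_all add: quotient_of_denom_pos quotient_of_coprime quotient_of_div)
  with assms have "of_int (a ^ 2) = (of_int (k * d ^ 2) :: rat)"
    by (simp add: power_divide divide_eq_eq)
  then have "d dvd a ^ 2"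
    by (simp only: of_int_eq_iff) simp
  moreover have "coprime (a ^ 2) d"
    using \<open>coprime a d\<close> by simp
  ultimately have "is_unit d"
    using coprime_absorb_right[of d "a ^ 2"] by blast
  with \<open>d > 0\<close> \<open>x = _\<close> show ?thesis
    by auto
qed

lemma rat_pair_eq_scaled_coprime_ints:
  fixes M e :: rat
  assumes "(M, e) \<noteq> (0, 0)"
  obtains L :: rat and m f :: int
  where "L \<noteq> 0" "coprime m f" "M = L * of_int m" "e = L * of_int f"
proof -
  obtain a1 d1 where q1: "quotient_of M = (a1, d1)" by (cases "quotient_of M")
  obtain a2 d2 where q2: "quotient_of e = (a2, d2)" by (cases "quotient_of e")
  have "d1 > 0" "d2 > 0"
    using q1 q2 by (simp_all add: quotient_of_denom_pos)
  define x y where "x = a1 * d2" and "y = a2 * d1"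
  have M: "M = of_int x / of_int (d1 * d2)" and e: "e = of_int y / of_int (d1 * d2)"
    using q1 q2 \<open>d1 > 0\<close> \<open>d2 > 0\<close> by (simp_all add: quotient_of_div x_def y_def)
  with assms have "x \<noteq> 0 \<or> y \<noteq> 0"
    by auto
  then have "coprime (x div gcd x y) (y div gcd x y)" "gcd x y \<noteq> 0"
    by (simp_all add: div_gcd_coprime)
  moreover have "M = of_int (gcd x y) / of_int (d1 * d2) * of_int (x div gcd x y)"
    and "e = of_int (gcd x y) / of_int (d1 * d2) * of_int (y div gcd x y)"
    unfolding M e by (simp_all flip: of_int_mult)
  ultimately show ?thesis
    using that[of "of_int (gcd x y) / of_int (d1 * d2)"] \<open>d1 > 0\<close> \<open>d2 > 0\<close> by simp
qed

lemma quartic_rat_point_imp_coprime_int_point: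
  fixes b c :: int and M e N :: rat
  assumes "(M, e) \<noteq> (0, 0)" and "N ^ 2 = of_int b * M ^ 4 - of_int c * e ^ 4"
  obtains m f n :: int where "coprime m f" "n ^ 2 = b * m ^ 4 - c * f ^ 4"
proof -
  obtain L m f where "L \<noteq> 0" "coprime m f" "M = L * of_int m" "e = L * of_int f"
    using rat_pair_eq_scaled_coprime_ints[OF assms(1)] .
  with assms(2) have "(N / L ^ 2) ^ 2 = of_int (b * m ^ 4 - c * f ^ 4)"
    by (simp add: field_simps flip: power_mult)
  then obtain n where "N / L ^ 2 = of_int n"
    using rat_power2_eq_of_int_imp_int by blast
  with \<open>(N / L ^ 2) ^ 2 = _\<close> have "n ^ 2 = b * m ^ 4 - c * f ^ 4"
    by (metis of_int_eq_iff of_int_power)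
  with \<open>coprime m f\<close> show ?thesis
    using that by blast
qed

lemma QuadRes_mult:
  assumes "QuadRes p a" and "QuadRes p b"
  shows "QuadRes p (a * b)"
proof -
  obtain y z where "[y ^ 2 = a] (mod p)" "[z ^ 2 = b] (mod p)"
    using assms unfolding QuadRes_def by blast
  then have "[(y * z) ^ 2 = a * b] (mod p)"
    by (simp add: power_mult_distrib cong_mult)
  then show ?thesis
    unfolding QuadRes_def by blast
qed

lemma QuadRes_if_prime_factors_QuadRes:
  fixes n :: nat
  assumes "\<And>r. prime r \<Longrightarrow> r dvd n \<Longrightarrow> QuadRes p (int r)"
  shows "QuadRes p (int n)"
  using assms
proof (induction n rule: prime_divisors_induct)
  case zero
  show ?case
    unfolding QuadRes_def by (metis cong_refl of_nat_0 zero_power2)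
next
  case (unit n)
  then have "n = 1"
    by simp
  then show ?case
    unfolding QuadRes_def by (metis cong_refl of_nat_1 power_one)
next
  case (factor r n)
  then show ?case
    using QuadRes_mult[of p "int r" "int n"] by simp
qed

lemma QuadRes_two:
  fixes p :: int
  assumes "prime p" and "p mod 8 = 1"
  shows "QuadRes p 2"
proof -
  define k where "k = p div 8"
  have p: "p = 8 * k + 1"
    using assms(2) div_mult_mod_eq[of p 8] unfolding k_def by linarith
  with prime_gt_1_int[OF assms(1)] have "k > 0" "nat p > 2"
    by simp_all
  have "\<not> [2 = 0] (mod int (nat p))"
    using \<open>nat p > 2\<close> by (auto simp: cong_0_iff dest: zdvd_imp_le)
  then interpret GAUSS "nat p" 2
    using assms(1) \<open>nat p > 2\<close> by unfold_locales simp_all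
  have half: "(int (nat p) - 1) div 2 = 4 * k"
    using p \<open>k > 0\<close> by simp
  have "C = (\<lambda>x. x * 2) ` A"
    unfolding C_def B_def image_image
  proof (rule image_cong[OF refl])
    fix x assume "x \<in> A"
    then show "x * 2 mod int (nat p) = x * 2"
      unfolding A_def half using p \<open>k > 0\<close> by simp
  qed
  then have "E = (\<lambda>x. x * 2) ` {2 * k <.. 4 * k}"
    unfolding E_def A_def half by auto
  then have "card E = 2 * nat k"
    by (simp add: card_image inj_on_def)
  then have "Legendre 2 p = 1"
    using gauss_lemma p \<open>k > 0\<close> by (simp add: power_mult)
  then show ?thesis
    unfolding Legendre_def by (auto split: if_splits)
qed

lemma QuadRes_by_reciprocity:
  fixes p r :: int
  assumes "prime p" "prime r" "p mod 4 = 1" "r \<noteq> 2" "r \<noteq> p" and "Legendre p r = 1"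
  shows "QuadRes p r"
proof -
  have "p > 2" "r > 2"
    using assms(1-4) prime_gt_1_int[of p] prime_gt_1_int[of r] by presburger+
  moreover have "even ((p - 1) div 2)"
    using assms(3) by presburger
  ultimately have "Legendre p r * Legendre r p = 1"
    using Quadratic_Reciprocity_int[of p r] assms(1,2,5) by (simp add: even_nat_iff)
  with assms(6) have "Legendre r p = 1"
    by simp
  then show ?thesis
    unfolding Legendre_def by (auto split: if_splits)
qed

lemma QuadRes_if_cong_mult_square:
  fixes r x y a :: int
  assumes "prime r" "\<not> r dvd y" "[x ^ 2 = a * y ^ 2] (mod r)"
  shows "QuadRes r a"
proof -
  have "coprime y r"
    using assms(1,2) prime_imp_coprime coprime_commute by blast
  then obtain w where w: "[y * w = 1] (mod r)"
    using cong_solve_coprime_int by blast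
  have "[(x * w) ^ 2 = a * (y * w) ^ 2] (mod r)"
    using cong_scalar_right[OF assms(3), of "w ^ 2"] by (simp add: power_mult_distrib ac_simps)
  also have "[a * (y * w) ^ 2 = a * 1 ^ 2] (mod r)"
    using w by (intro cong_scalar_left cong_pow)
  finally show ?thesis
    unfolding QuadRes_def by auto
qed

lemma quartic_symbol_eq_1_if_cong_fourth_power:
  fixes p a x y :: int
  assumes "prime p" "p mod 4 = 1" "\<not> p dvd a" "\<not> p dvd y" "[x ^ 4 = a * y ^ 4] (mod p)"
  shows "quartic_symbol a p = 1"
proof -
  define K where "K = nat ((p - 1) div 4)"
  have "p - 1 = 4 * ((p - 1) div 4)"
    using assms(2) by presburger
  then have K: "nat (p - 1) = 4 * K"
    unfolding K_def by (metis nat_mult_distrib nat_numeral zero_le_numeral)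
  have "\<not> p dvd a * y ^ 4"
    using assms(1,3,4) by (simp add: prime_dvd_mult_iff prime_dvd_power_iff)
  moreover have "p dvd x ^ 4 \<longleftrightarrow> p dvd a * y ^ 4"
    using assms(5) by (rule cong_dvd_iff)
  ultimately have "\<not> p dvd x"
    using assms(1) by (auto simp: prime_dvd_power_iff)
  have "[a ^ K = a ^ K * 1] (mod p)"
    by simp
  also have "[a ^ K * 1 = a ^ K * (y ^ 4) ^ K] (mod p)"
    using fermat_theorem_int[OF assms(1,4)] K by (intro cong_scalar_left) (simp add: cong_sym flip: power_mult)
  also have "a ^ K * (y ^ 4) ^ K = (a * y ^ 4) ^ K"
    by (simp add: power_mult_distrib)
  also have "[(a * y ^ 4) ^ K = (x ^ 4) ^ K] (mod p)"
    using assms(5) by (simp add: cong_sym cong_pow)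
  also have "[(x ^ 4) ^ K = 1] (mod p)"
    using fermat_theorem_int[OF assms(1) \<open>\<not> p dvd x\<close>] K by (simp flip: power_mult)
  finally show ?thesis
    unfolding quartic_symbol_def K_def by simp
qed

lemma quartic_symbol_uminus:
  fixes p a :: int
  assumes "p mod 8 = 1"
  shows "quartic_symbol (- a) p = quartic_symbol a p"
proof -
  have "even ((p - 1) div 4)"
    using assms by presburger
  then have "even (nat ((p - 1) div 4))"
    by (cases "(p - 1) div 4 \<ge> 0") (simp_all add: even_nat_iff)
  then show ?thesis
    unfolding quartic_symbol_def by simp
qed

lemma quartic_symbol_mult_square:
  fixes p a k :: int
  assumes "prime p" "p mod 4 = 1" "QuadRes p k" "\<not> p dvd k"
  shows "quartic_symbol (a * k ^ 2) p = quartic_symbol a p"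
proof -
  define K where "K = nat ((p - 1) div 4)"
  obtain v where "[v ^ 2 = k] (mod p)"
    using assms(3) unfolding QuadRes_def by blast
  then have "[v ^ 4 = k ^ 2 * 1 ^ 4] (mod p)"
    using cong_pow[of "v ^ 2" k p 2] by (simp flip: power_mult)
  moreover have "\<not> p dvd k ^ 2"
    using assms(1,4) by (simp add: prime_dvd_power_iff)
  ultimately have "quartic_symbol (k ^ 2) p = 1"
    using quartic_symbol_eq_1_if_cong_fourth_power[of p "k ^ 2" 1 v] assms(1,2) by auto
  then have "[a ^ K * (k ^ 2) ^ K = a ^ K * 1] (mod p)"
    unfolding quartic_symbol_def K_def by (intro cong_scalar_left) (simp split: if_splits)
  then have "[(a * k ^ 2) ^ K = a ^ K] (mod p)"
    by (simp add: power_mult_distrib)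
  then show ?thesis
    unfolding quartic_symbol_def K_def[symmetric] by (metis cong_sym cong_trans)
qed

lemma prime_dvd_solution_QuadRes:
  fixes p d b c m f n r :: int
  assumes "prime p" "p mod 8 = 1"
    and d_QuadRes: "\<And>s. prime s \<Longrightarrow> s dvd d \<Longrightarrow> QuadRes p s"
    and bc: "b * c = p * d ^ 2" and "coprime m f" and n: "n ^ 2 = b * m ^ 4 - c * f ^ 4"
    and "prime r" "r dvd n"
  shows "QuadRes p r"
proof -
  consider "r = p" | "r = 2" | "r dvd d" | "r \<noteq> p" "r \<noteq> 2" "\<not> r dvd d"
    by blast
  then show ?thesis
  proof cases
    case 1
    have "[0 ^ 2 = p] (mod p)"
      by (simp add: cong_def)
    with 1 show ?thesis
      unfolding QuadRes_def by blast
  next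
    case 2
    with assms(1,2) show ?thesis
      by (simp add: QuadRes_two)
  next
    case 3
    with d_QuadRes \<open>prime r\<close> show ?thesis
      by blast
  next
    case 4
    have "\<not> r dvd p"
      using 4 \<open>prime r\<close> \<open>prime p\<close> primes_dvd_imp_eq by blast
    have "\<not> r dvd b"
    proof
      assume "r dvd b"
      then have "r dvd p * d ^ 2"
        by (metis bc dvd_mult2)
      with \<open>prime r\<close> \<open>\<not> r dvd p\<close> 4 show False
        by (simp add: prime_dvd_mult_iff prime_dvd_power_iff)
    qed
    have "r dvd n ^ 2"
      using \<open>r dvd n\<close> by (simp add: power2_eq_square)
    then have cong: "[b * m ^ 4 = c * f ^ 4] (mod r)"
      using n by (simp add: cong_iff_dvd_diff)
    have "\<not> r dvd f"
    proof
      assume "r dvd f"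
      then have "r dvd c * f ^ 4"
        by (simp add: power_numeral_reduce)
      then have "r dvd b * m ^ 4"
        using cong by (simp add: cong_dvd_iff)
      with \<open>prime r\<close> \<open>\<not> r dvd b\<close> have "r dvd m"
        by (simp add: prime_dvd_mult_iff prime_dvd_power_iff)
      with \<open>r dvd f\<close> \<open>coprime m f\<close> \<open>prime r\<close> show False
        by (meson coprime_common_divisor not_prime_unit)
    qed
    have "[(b * m ^ 2) ^ 2 = b * c * f ^ 4] (mod r)"
      using cong_scalar_left[OF cong, of b] by (simp add: power2_eq_square power4_eq_xxxx ac_simps)
    then have "[(b * m ^ 2) ^ 2 = p * (d * f ^ 2) ^ 2] (mod r)"
      by (simp add: bc power_mult_distrib mult.assoc flip: power_mult)
    moreover have "\<not> r dvd d * f ^ 2"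
      using \<open>prime r\<close> 4 \<open>\<not> r dvd f\<close> by (simp add: prime_dvd_mult_iff prime_dvd_power_iff)
    ultimately have "QuadRes r p"
      using \<open>prime r\<close> QuadRes_if_cong_mult_square by blast
    with \<open>\<not> r dvd p\<close> have "Legendre p r = 1"
      by (simp add: Legendre_def cong_0_iff)
    moreover have "p mod 4 = 1"
      using assms(2) by presburger
    ultimately show ?thesis
      using QuadRes_by_reciprocity assms(1) \<open>prime r\<close> 4 by blast
  qed
qed

lemma solution_square_cong_fourth_power:
  fixes p d b c m f n :: int
  assumes "prime p" "p mod 8 = 1"
    and "\<And>s. prime s \<Longrightarrow> s dvd d \<Longrightarrow> QuadRes p s"
    and "b * c = p * d ^ 2" "coprime m f" "n ^ 2 = b * m ^ 4 - c * f ^ 4"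
  obtains u where "[u ^ 4 = n ^ 2] (mod p)"
proof -
  have "QuadRes p (int (nat \<bar>n\<bar>))"
  proof (rule QuadRes_if_prime_factors_QuadRes)
    fix r assume "prime r" "r dvd nat \<bar>n\<bar>"
    then show "QuadRes p (int r)"
      using prime_dvd_solution_QuadRes[OF assms, of "int r"] by simp
  qed
  then obtain u where "[u ^ 2 = \<bar>n\<bar>] (mod p)"
    unfolding QuadRes_def by auto
  then have "[(u ^ 2) ^ 2 = \<bar>n\<bar> ^ 2] (mod p)"
    by (rule cong_pow)
  then show ?thesis
    using that by (simp flip: power_mult)
qed

lemma quartic_symbol_coeff_eq_1_if_solution:
  fixes p d b c m f n :: int
  assumes "prime p" "p mod 8 = 1" "\<not> p dvd d"
    and "\<And>s. prime s \<Longrightarrow> s dvd d \<Longrightarrow> QuadRes p s"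
    and "b * c = p * d ^ 2" "coprime m f" "n ^ 2 = b * m ^ 4 - c * f ^ 4"
    and "p dvd c"
  shows "quartic_symbol b p = 1"
proof -
  have p2: "\<not> p ^ 2 dvd b * c"
  proof
    assume "p ^ 2 dvd b * c"
    then have "p dvd d ^ 2"
      using \<open>prime p\<close> by (simp add: assms(5) power2_eq_square)
    with assms(1,3) show False
      by (simp add: prime_dvd_power_iff)
  qed
  then have "\<not> p dvd b"
    using \<open>p dvd c\<close> by (auto simp: power2_eq_square intro: mult_dvd_mono)
  have "\<not> p dvd m"
  proof
    assume "p dvd m"
    then have "\<not> p dvd f"
      using \<open>coprime m f\<close> \<open>prime p\<close> by (meson coprime_common_divisor not_prime_unit)
    have "p ^ 2 dvd b * m ^ 4"
      using \<open>p dvd m\<close> by (simp add: power4_eq_xxxx power2_eq_square mult_dvd_mono)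
    moreover have "p dvd b * m ^ 4 - c * f ^ 4"
      using \<open>p dvd m\<close> \<open>p dvd c\<close> by (simp add: power_numeral_reduce)
    then have "p ^ 2 dvd n ^ 2"
      using \<open>prime p\<close> by (simp add: assms(7)[symmetric] prime_dvd_power_iff)
    moreover have "c * f ^ 4 = b * m ^ 4 - n ^ 2"
      using assms(7) by simp
    ultimately have "p ^ 2 dvd c * f ^ 4"
      by simp
    moreover have "coprime (p ^ 2) (f ^ 4)"
      using \<open>prime p\<close> \<open>\<not> p dvd f\<close> by (simp add: prime_imp_coprime)
    ultimately have "p ^ 2 dvd c"
      using coprime_dvd_mult_left_iff by blast
    with p2 show False
      by simp
  qed
  obtain u where "[u ^ 4 = n ^ 2] (mod p)"
    using solution_square_cong_fourth_power assms(1,2,4-7) by blast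
  also have "[n ^ 2 = b * m ^ 4] (mod p)"
    using assms(7) \<open>p dvd c\<close> by (simp add: cong_iff_dvd_diff)
  finally have "[u ^ 4 = b * m ^ 4] (mod p)" .
  moreover have "p mod 4 = 1"
    using assms(2) by presburger
  ultimately show ?thesis
    using quartic_symbol_eq_1_if_cong_fourth_power assms(1) \<open>\<not> p dvd b\<close> \<open>\<not> p dvd m\<close> by blast
qed

lemma quartic_symbol_factor_eq_1_if_solution:
  fixes p d t k b c m f n :: int
  assumes "prime p" "p mod 8 = 1" "\<not> p dvd d"
    and d_QuadRes: "\<And>s. prime s \<Longrightarrow> s dvd d \<Longrightarrow> QuadRes p s"
    and "t * k = d" "b \<in> {t, -t, -p * t, p * t}"
    and bc: "b * c = p * d ^ 2" and "coprime m f" and n: "n ^ 2 = b * m ^ 4 - c * f ^ 4"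
  shows "quartic_symbol t p = 1"
proof -
  have coeff_b: "quartic_symbol b p = 1" if "p dvd c"
    using quartic_symbol_coeff_eq_1_if_solution[OF assms(1-4) bc \<open>coprime m f\<close> n that] .
  \<comment> \<open>The substitution (b, c, m, f) := (-c, -b, f, m) preserves both b c and the equation.\<close>
  have coeff_c: "quartic_symbol (- c) p = 1" if "p dvd b"
    using quartic_symbol_coeff_eq_1_if_solution[OF assms(1-4), of "- c" "- b" f m n] bc
      \<open>coprime m f\<close> n that by (simp add: ac_simps coprime_commute)
  have "t \<noteq> 0" "p \<noteq> 0"
    using assms(1,3,5) by auto
  have "QuadRes p (int (nat \<bar>k\<bar>))"
  proof (rule QuadRes_if_prime_factors_QuadRes)
    fix r assume "prime r" "r dvd nat \<bar>k\<bar>"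
    then have "int r dvd d"
      using \<open>t * k = d\<close> by (metis dvd_mult dvd_nat_abs_iff)
    with \<open>prime r\<close> show "QuadRes p (int r)"
      using d_QuadRes by simp
  qed
  moreover have "\<not> p dvd \<bar>k\<bar>"
    using assms(3,5) by auto
  moreover have "p mod 4 = 1"
    using assms(2) by presburger
  ultimately have square: "quartic_symbol (a * k ^ 2) p = quartic_symbol a p" for a
    using quartic_symbol_mult_square[OF assms(1), of "\<bar>k\<bar>" a] by simp
  have bc': "b * c = t * (p * t * k ^ 2)"
    using bc \<open>t * k = d\<close> by (simp add: power2_eq_square ac_simps)
  have "b \<noteq> 0"
    using assms(6) \<open>t \<noteq> 0\<close> \<open>p \<noteq> 0\<close> by auto
  then have c: "c = x" if "b * c = b * x" for x
    using that by simp
  from assms(6) show ?thesis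
  proof (elim insertE emptyE)
    assume "b = t"
    with bc' have "c = p * t * k ^ 2"
      by (intro c) simp
    then show ?thesis
      using coeff_b \<open>b = t\<close> by simp
  next
    assume "b = -t"
    with bc' have "c = - (p * t * k ^ 2)"
      by (intro c) simp
    then have "quartic_symbol (- t) p = 1"
      using coeff_b \<open>b = -t\<close> by simp
    then show ?thesis
      using quartic_symbol_uminus[OF assms(2)] by simp
  next
    assume "b = -p * t"
    with bc' have "c = - (t * k ^ 2)"
      by (intro c) (simp add: ac_simps)
    then have "quartic_symbol (t * k ^ 2) p = 1"
      using coeff_c \<open>b = -p * t\<close> by simp
    then show ?thesis
      using square by simp
  next
    assume "b = p * t"
    with bc' have "c = t * k ^ 2"
      by (intro c) (simp add: ac_simps)
    then have "quartic_symbol (- (t * k ^ 2)) p = 1"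
      using coeff_c \<open>b = p * t\<close> by simp
    then show ?thesis
      using square quartic_symbol_uminus[OF assms(2)] by simp
  qed
qed

lemma quartic_symbol_eq_1_if_has_nontrivial_point:
  fixes p q t k b :: int
  assumes "prime p" "p mod 8 = 1" "\<not> p dvd 2 * q"
    and "\<And>s. prime s \<Longrightarrow> s dvd 2 * q \<Longrightarrow> QuadRes p s"
    and "t * k = 2 * q" "b \<in> {t, -t, -p * t, p * t}" "has_nontrivial_point p q b"
  shows "quartic_symbol t p = 1"
proof -
  have "b dvd p * t"
    using assms(6) by auto
  moreover have "p * (2 * q) ^ 2 = p * t * (t * k ^ 2)"
    unfolding \<open>t * k = 2 * q\<close>[symmetric] by (simp add: power2_eq_square ac_simps)
  ultimately have "b dvd p * (2 * q) ^ 2"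
    by (metis dvd_mult2)
  then obtain c where bc: "b * c = p * (2 * q) ^ 2"
    by (metis dvdE)
  have "b \<noteq> 0"
    using bc assms(1,3) by auto
  obtain M e N :: rat where "(M, e) \<noteq> (0, 0)"
    and "N ^ 2 = of_int b * M ^ 4 - (of_int (4 * p * q ^ 2) / of_int b) * e ^ 4"
    using assms(7) unfolding has_nontrivial_point_def by blast
  moreover have "of_int (4 * p * q ^ 2) / of_int b = (of_int c :: rat)"
    using bc \<open>b \<noteq> 0\<close> by (simp add: field_simps flip: of_int_mult)
  ultimately obtain m f n where "coprime m f" "n ^ 2 = b * m ^ 4 - c * f ^ 4"
    using quartic_rat_point_imp_coprime_int_point by (metis (no_types))
  then show ?thesis
    using quartic_symbol_factor_eq_1_if_solution[OF assms(1-6) bc] by blast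
qed

theorem proposition4:
  fixes p q :: int
  assumes "prime p" and "prime q"
    and "p mod 8 = 1" and "q mod 4 = 3"
    and "Legendre p q = 1"
  shows "((\<exists>b1 \<in> {2, -2, -2 * p, 2 * p}. has_nontrivial_point p q b1) \<longrightarrow> quartic_symbol 2 p = 1)
       \<and> ((\<exists>b1 \<in> {q, -q, -p * q, p * q}. has_nontrivial_point p q b1) \<longrightarrow> quartic_symbol q p = 1)
       \<and> ((\<exists>b1 \<in> {2 * q, -2 * q, -2 * p * q, 2 * p * q}. has_nontrivial_point p q b1) \<longrightarrow> quartic_symbol (2 * q) p = 1)"
proof -
  have "p mod 4 = 1" "p \<noteq> 2" "q \<noteq> 2" "q \<noteq> p"
    using assms(3,4) by presburger+
  have prime_dvd_2q: "s = 2 \<or> s = q" if "prime s" "s dvd 2 * q" for s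
    using that assms(2) primes_dvd_imp_eq[of s 2] primes_dvd_imp_eq[of s q]
    by (auto simp: prime_dvd_mult_iff)
  then have "\<not> p dvd 2 * q"
    using assms(1) \<open>p \<noteq> 2\<close> \<open>q \<noteq> p\<close> by blast
  have QR: "QuadRes p s" if "prime s" "s dvd 2 * q" for s
    using prime_dvd_2q[OF that] QuadRes_two[OF assms(1,3)]
      QuadRes_by_reciprocity[OF assms(1,2) \<open>p mod 4 = 1\<close> \<open>q \<noteq> 2\<close> \<open>q \<noteq> p\<close> assms(5)] by blast
  note point = quartic_symbol_eq_1_if_has_nontrivial_point[OF assms(1,3) \<open>\<not> p dvd 2 * q\<close> QR]
  have "quartic_symbol 2 p = 1" if "b \<in> {2, -2, -2 * p, 2 * p}" "has_nontrivial_point p q b" for b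
    using that by (intro point[of 2 q b]) auto
  moreover have "quartic_symbol q p = 1" if "b \<in> {q, -q, -p * q, p * q}" "has_nontrivial_point p q b" for b
    using that by (intro point[of q 2 b]) auto
  moreover have "quartic_symbol (2 * q) p = 1"
    if "b \<in> {2 * q, -2 * q, -2 * p * q, 2 * p * q}" "has_nontrivial_point p q b" for b
    using that by (intro point[of "2 * q" 1 b]) auto
  ultimately show ?thesis
    by blast
qed

end
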